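(* Let $G$ be a finite group and $\alpha\in\mathbb{Z}_{\ge0}$. (i) If $(A,M)$ is a NIM-rep of the near-group fusion ring $K(G,\alpha)$ such that $M$ is a single $G$-orbit, then there are a subgroup $H\le G$ with $M\cong G/H$ as $G$-sets, and a positive integer $c$ such that $X\vartriangleright m=c\sum_{m'\in M}m'$ for all $m\in M$, and these satisfy $\alpha=c\,[G:H]-\frac{|H|}{c}$, $c$ divides $|H|$, and $c^2[G:H]\ge|H|$. (ii) Conversely, for every subgroup $H\le G$ and positive integer $c$ satisfying $\alpha=c[G:H]-|H|/c$, $c\mid|H|$ and $c^2[G:H]\ge|H|$, the free $\mathbb{Z}$-module with basis $M=\{m_{xH}: xH\in G/H\}$, with $g\vartriangleright m_{xH}=m_{gxH}$ and $X\vartriangleright m=c\sum_{m'\in M}m'$, is a NIM-rep of $K(G,\alpha)$ consisting of one $G$-orbit. Thus one-orbit NIM-reps of $K(G,\alpha)$ are parametrised by such pairs $(H,c)$.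
   Context: The near-group fusion ring $K(G,\alpha)$ is the free $\mathbb{Z}$-module with basis $G\cup\{X\}$, with multiplication given by the group law on $G$, $gX=Xg=X$ for $g\in G$, and $X^2=\sum_{g\in G}g+\alpha X$; the involution is $g^*=g^{-1}$, $X^*=X$. A NIM-rep of a fusion ring $(R,B)$ is a nonzero left $R$-module $A$ which is a free $\mathbb{Z}$-module with a fixed basis $M$, such that each $b\vartriangleright m$ ($b\in B$, $m\in M$) is a non-negative integer combination of elements of $M$, and such that for the symmetric bilinear form with $(m,m')=\delta_{m,m'}$ on $M$, $(b\vartriangleright m,m')=(m,b^*\vartriangleright m')$. For NIM-reps of $K(G,\alpha)$ each $g\in G$ permutes $M$, giving a $G$-action on $M$. *)

theory Defs
  imports "HOL-Algebra.Algebra"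
begin

datatype 'g ng_basis = Grp 'g | Xel

definition ng_basis_set :: "('g, 'b) monoid_scheme \<Rightarrow> 'g ng_basis set" where
  "ng_basis_set G = Grp ` carrier G \<union> {Xel}"

text \<open>Structure constants: coefficient of c in the product a * b in K(G,alpha).\<close>
fun ng_coeff :: "('g, 'b) monoid_scheme \<Rightarrow> nat \<Rightarrow> 'g ng_basis \<Rightarrow> 'g ng_basis \<Rightarrow> 'g ng_basis \<Rightarrow> nat" where
  "ng_coeff G \<alpha> (Grp g) (Grp h) c = (if c = Grp (g \<otimes>\<^bsub>G\<^esub> h) then 1 else 0)"
| "ng_coeff G \<alpha> (Grp g) Xel c = (if c = Xel then 1 else 0)"
| "ng_coeff G \<alpha> Xel (Grp g) c = (if c = Xel then 1 else 0)"
| "ng_coeff G \<alpha> Xel Xel (Grp k) = (if k \<in> carrier G then 1 else 0)"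
| "ng_coeff G \<alpha> Xel Xel Xel = \<alpha>"

fun ng_dual :: "('g, 'b) monoid_scheme \<Rightarrow> 'g ng_basis \<Rightarrow> 'g ng_basis" where
  "ng_dual G (Grp g) = Grp (inv\<^bsub>G\<^esub> g)"
| "ng_dual G Xel = Xel"

text \<open>A NIM-rep of K(G,alpha) with basis M, given by the matrix coefficients:
  act b m m' is the coefficient of m' in b \<rhd> m (a non-negative integer).
  The action is extended Z-linearly; the module axioms reduce to the conditions
  on basis elements below (unit acts trivially, b \<rhd> (b' \<rhd> m) = (b b') \<rhd> m).\<close>
definition ng_nimrep ::
  "('g, 'b) monoid_scheme \<Rightarrow> nat \<Rightarrow> 'm set \<Rightarrow> ('g ng_basis \<Rightarrow> 'm \<Rightarrow> 'm \<Rightarrow> nat) \<Rightarrow> bool" where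
  "ng_nimrep G \<alpha> M act \<longleftrightarrow>
     M \<noteq> {} \<and>
     (\<forall>b\<in>ng_basis_set G. \<forall>m\<in>M. \<forall>m'. m' \<notin> M \<longrightarrow> act b m m' = 0) \<and>
     (\<forall>b\<in>ng_basis_set G. \<forall>m\<in>M. finite {m'\<in>M. act b m m' \<noteq> 0}) \<and>
     (\<forall>m\<in>M. \<forall>m'\<in>M. act (Grp \<one>\<^bsub>G\<^esub>) m m' = (if m' = m then 1 else 0)) \<and>
     (\<forall>b\<in>ng_basis_set G. \<forall>b'\<in>ng_basis_set G. \<forall>m\<in>M. \<forall>m''\<in>M.
        (\<Sum>m'\<in>{m'\<in>M. act b' m m' \<noteq> 0}. act b' m m' * act b m' m'')
        = (\<Sum>c\<in>ng_basis_set G. ng_coeff G \<alpha> b b' c * act c m m'')) \<and>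
     (\<forall>b\<in>ng_basis_set G. \<forall>m\<in>M. \<forall>m'\<in>M. act b m m' = act (ng_dual G b) m' m)"

text \<open>g \<rhd> m = m' (as elements of the module).\<close>
definition ng_gmaps ::
  "('g ng_basis \<Rightarrow> 'm \<Rightarrow> 'm \<Rightarrow> nat) \<Rightarrow> 'g \<Rightarrow> 'm \<Rightarrow> 'm \<Rightarrow> bool" where
  "ng_gmaps act g m m' \<longleftrightarrow> (\<forall>m''. act (Grp g) m m'' = (if m'' = m' then 1 else 0))"

definition ng_one_orbit ::
  "('g, 'b) monoid_scheme \<Rightarrow> 'm set \<Rightarrow> ('g ng_basis \<Rightarrow> 'm \<Rightarrow> 'm \<Rightarrow> nat) \<Rightarrow> bool" where
  "ng_one_orbit G M act \<longleftrightarrow> (\<exists>m0\<in>M. \<forall>m\<in>M. \<exists>g\<in>carrier G. ng_gmaps act g m0 m)"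

definition left_cosets :: "('g, 'b) monoid_scheme \<Rightarrow> 'g set \<Rightarrow> 'g set set" where
  "left_cosets G H = (\<lambda>x. x <#\<^bsub>G\<^esub> H) ` carrier G"

definition ng_coset_act ::
  "('g, 'b) monoid_scheme \<Rightarrow> 'g set \<Rightarrow> nat \<Rightarrow> 'g ng_basis \<Rightarrow> 'g set \<Rightarrow> 'g set \<Rightarrow> nat" where
  "ng_coset_act G H c b m m' =
     (case b of Grp g \<Rightarrow> (if m' = g <#\<^bsub>G\<^esub> m then 1 else 0)
              | Xel \<Rightarrow> (if m' \<in> left_cosets G H then c else 0))"

end

theory Submission
  imports Defs
begin

(* Each g in G acts on the basis M by a permutation, by a sum-of-squares argument using
   duality.  Since Xg = gX = X and X is self-dual, the matrix of X is invariant under the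
   G-action on both indices, hence constant, say c, on a single orbit; the orbit is G/H for
   the stabiliser H of a point m0.  Comparing coefficients of m0 in
   X |> (X |> m0) = sum_g g |> m0 + alpha X |> m0 gives [G:H] c^2 = |H| + alpha c, which is
   the formula for alpha and forces c > 0, c | |H| and c^2 [G:H] >= |H|.  Conversely, on G/H
   all relations hold because left multiplication is a transitive action, except
   X X = sum_g g + alpha X, which is exactly this identity. *)

lemma ng_basis_set_cases:
  assumes "b \<in> ng_basis_set G"
  obtains (Grp) g where "g \<in> carrier G" "b = Grp g" | (Xel) "b = Xel"
  using assms unfolding ng_basis_set_def by auto

lemma Grp_in_ng_basis_set: "g \<in> carrier G \<Longrightarrow> Grp g \<in> ng_basis_set G"
  and Xel_in_ng_basis_set: "Xel \<in> ng_basis_set G"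
  unfolding ng_basis_set_def by auto

lemma sum_ng_basis_set:
  assumes "finite (carrier G)"
  shows "(\<Sum>b\<in>ng_basis_set G. f b) = (\<Sum>k\<in>carrier G. f (Grp k)) + f Xel"
proof -
  have "(\<Sum>b\<in>ng_basis_set G. f b) = sum f (Grp ` carrier G) + f Xel"
    unfolding ng_basis_set_def using assms by (subst sum.union_disjoint) auto
  also have "sum f (Grp ` carrier G) = (\<Sum>k\<in>carrier G. f (Grp k))"
    by (simp add: sum.reindex inj_on_def)
  finally show ?thesis .
qed

lemma (in monoid) sum_ng_coeff_Grp_Grp:
  assumes "finite (carrier G)" "g \<in> carrier G" "h \<in> carrier G"
  shows "(\<Sum>b\<in>ng_basis_set G. ng_coeff G \<alpha> (Grp g) (Grp h) b * f b) = f (Grp (g \<otimes> h))"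
  using assms by (simp add: sum_ng_basis_set sum.delta' if_distrib[where f = "\<lambda>x. x * _"] cong: if_cong)

lemma sum_ng_coeff_Grp_Xel:
  assumes "finite (carrier G)"
  shows "(\<Sum>b\<in>ng_basis_set G. ng_coeff G \<alpha> (Grp g) Xel b * f b) = f Xel"
  using assms by (simp add: sum_ng_basis_set)

lemma sum_ng_coeff_Xel_Grp:
  assumes "finite (carrier G)"
  shows "(\<Sum>b\<in>ng_basis_set G. ng_coeff G \<alpha> Xel (Grp g) b * f b) = f Xel"
  using assms by (simp add: sum_ng_basis_set)

lemma sum_ng_coeff_Xel_Xel:
  assumes "finite (carrier G)"
  shows "(\<Sum>b\<in>ng_basis_set G. ng_coeff G \<alpha> Xel Xel b * f b)
    = (\<Sum>k\<in>carrier G. f (Grp k)) + \<alpha> * f Xel"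
  using assms by (simp add: sum_ng_basis_set)

lemma nat_sum_squares_eq_1:
  fixes f :: "'a \<Rightarrow> nat"
  assumes "finite S" "\<And>x. x \<in> S \<Longrightarrow> f x \<noteq> 0" "(\<Sum>x\<in>S. f x * f x) = 1"
  shows "\<exists>y. S = {y} \<and> f y = 1"
proof -
  have "card S = (\<Sum>x\<in>S. 1)" by simp
  also have "\<dots> \<le> (\<Sum>x\<in>S. f x * f x)"
    using assms(2) by (intro sum_mono) (simp add: Suc_le_eq)
  finally have "card S \<le> 1" using assms(3) by simp
  moreover have "S \<noteq> {}" using assms(3) by auto
  ultimately obtain y where "S = {y}"
    using assms(1) by (metis card_0_eq card_1_singletonE le_Suc_eq le_zero_eq One_nat_def)
  with assms(3) show ?thesis by auto
qed

(* A group action in the form needed here: unlike group_action of HOL-Algebra, the maps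
   sigma g are not required to be extensional bijections of M. *)
locale set_action = group G for G :: "('g, 'b) monoid_scheme" (structure) +
  fixes M :: "'m set" and \<sigma> :: "'g \<Rightarrow> 'm \<Rightarrow> 'm"
  assumes act_closed: "\<lbrakk>g \<in> carrier G; m \<in> M\<rbrakk> \<Longrightarrow> \<sigma> g m \<in> M"
    and act_one: "m \<in> M \<Longrightarrow> \<sigma> \<one> m = m"
    and act_mult:
      "\<lbrakk>g \<in> carrier G; h \<in> carrier G; m \<in> M\<rbrakk> \<Longrightarrow> \<sigma> (g \<otimes> h) m = \<sigma> g (\<sigma> h m)"
begin

lemma act_inv_act: "\<lbrakk>g \<in> carrier G; m \<in> M\<rbrakk> \<Longrightarrow> \<sigma> (inv g) (\<sigma> g m) = m"
  by (simp add: act_mult[symmetric] act_one)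

lemma act_act_inv: "\<lbrakk>g \<in> carrier G; m \<in> M\<rbrakk> \<Longrightarrow> \<sigma> g (\<sigma> (inv g) m) = m"
  by (simp add: act_mult[symmetric] act_one)

lemma act_eq_iff:
  assumes "g \<in> carrier G" "m \<in> M" "m' \<in> M"
  shows "\<sigma> g m = m' \<longleftrightarrow> m = \<sigma> (inv g) m'"
  using act_inv_act[OF assms(1,2)] act_act_inv[OF assms(1,3)] by auto

lemma orbit_eq_image: "orbit G \<sigma> m = (\<lambda>g. \<sigma> g m) ` carrier G"
  unfolding orbit_def by blast

lemma orbit_subset: "m \<in> M \<Longrightarrow> orbit G \<sigma> m \<subseteq> M"
  unfolding orbit_eq_image using act_closed by blast

lemma subgroup_stabilizer:
  assumes "m \<in> M"
  shows "subgroup (stabilizer G \<sigma> m) G"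
proof (rule subgroupI)
  show "stabilizer G \<sigma> m \<subseteq> carrier G" "stabilizer G \<sigma> m \<noteq> {}"
    using assms act_one unfolding stabilizer_def by auto
next
  fix g h assume "g \<in> stabilizer G \<sigma> m" "h \<in> stabilizer G \<sigma> m"
  then have g: "g \<in> carrier G" "\<sigma> g m = m" and h: "h \<in> carrier G" "\<sigma> h m = m"
    unfolding stabilizer_def by auto
  show "inv g \<in> stabilizer G \<sigma> m"
    using act_inv_act[OF g(1) assms] g unfolding stabilizer_def by simp
  show "g \<otimes> h \<in> stabilizer G \<sigma> m"
    using g h assms unfolding stabilizer_def by (simp add: act_mult)
qed

lemma card_transporter:
  assumes m0: "m0 \<in> M" and "m \<in> orbit G \<sigma> m0" "m' \<in> orbit G \<sigma> m0"
  shows "card {k \<in> carrier G. \<sigma> k m = m'} = card (stabilizer G \<sigma> m0)"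
proof -
  obtain a b where a: "a \<in> carrier G" "m = \<sigma> a m0" and b: "b \<in> carrier G" "m' = \<sigma> b m0"
    using assms(2,3) unfolding orbit_eq_image by blast
  have "bij_betw (\<lambda>k. inv b \<otimes> k \<otimes> a) {k \<in> carrier G. \<sigma> k m = m'} (stabilizer G \<sigma> m0)"
  proof (rule bij_betw_byWitness[where f' = "\<lambda>h. b \<otimes> h \<otimes> inv a"])
    show "(\<lambda>k. inv b \<otimes> k \<otimes> a) ` {k \<in> carrier G. \<sigma> k m = m'} \<subseteq> stabilizer G \<sigma> m0"
    proof (rule image_subsetI)
      fix k assume "k \<in> {k \<in> carrier G. \<sigma> k m = m'}"
      then have "k \<in> carrier G" "\<sigma> k m = m'" by auto
      then have "\<sigma> (inv b \<otimes> k \<otimes> a) m0 = \<sigma> (inv b) (\<sigma> b m0)"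
        using a b m0 by (simp add: act_mult act_closed)
      then show "inv b \<otimes> k \<otimes> a \<in> stabilizer G \<sigma> m0"
        using a b m0 \<open>k \<in> carrier G\<close> by (simp add: stabilizer_def act_inv_act)
    qed
    show "(\<lambda>h. b \<otimes> h \<otimes> inv a) ` stabilizer G \<sigma> m0 \<subseteq> {k \<in> carrier G. \<sigma> k m = m'}"
    proof (rule image_subsetI)
      fix h assume "h \<in> stabilizer G \<sigma> m0"
      then have "h \<in> carrier G" "\<sigma> h m0 = m0" unfolding stabilizer_def by auto
      then show "b \<otimes> h \<otimes> inv a \<in> {k \<in> carrier G. \<sigma> k m = m'}"
        using a b m0 by (simp add: act_mult act_closed act_inv_act)
    qed
    have "b \<otimes> (inv b \<otimes> k \<otimes> a) \<otimes> inv a = k" "inv b \<otimes> (b \<otimes> k \<otimes> inv a) \<otimes> a = k"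
      if "k \<in> carrier G" for k
      using that a(1) b(1) by (simp_all add: m_assoc) (simp_all add: m_assoc[symmetric])
    then show "\<forall>k \<in> {k \<in> carrier G. \<sigma> k m = m'}. b \<otimes> (inv b \<otimes> k \<otimes> a) \<otimes> inv a = k"
      and "\<forall>h \<in> stabilizer G \<sigma> m0. inv b \<otimes> (b \<otimes> h \<otimes> inv a) \<otimes> a = h"
      unfolding stabilizer_def by auto
  qed
  then show ?thesis by (rule bij_betw_same_card)
qed

lemma transporter_eq_l_coset:
  assumes m0: "m0 \<in> M" and a: "a \<in> carrier G"
  shows "{g \<in> carrier G. \<sigma> g m0 = \<sigma> a m0} = a <# stabilizer G \<sigma> m0"
proof -
  note stab = subgroup_stabilizer[OF m0]
  have iff: "inv a \<otimes> g \<in> stabilizer G \<sigma> m0 \<longleftrightarrow> \<sigma> g m0 = \<sigma> a m0"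
    if g: "g \<in> carrier G" for g
  proof -
    have "inv a \<otimes> g \<in> stabilizer G \<sigma> m0 \<longleftrightarrow> \<sigma> (inv a) (\<sigma> g m0) = m0"
      using a g by (simp add: stabilizer_def act_mult[OF inv_closed[OF a] g m0])
    also have "\<dots> \<longleftrightarrow> \<sigma> g m0 = \<sigma> (inv (inv a)) m0"
      by (rule act_eq_iff[OF inv_closed[OF a] act_closed[OF g m0] m0])
    finally show ?thesis using a by simp
  qed
  show ?thesis
  proof (intro equalityI subsetI)
    fix g assume "g \<in> {g \<in> carrier G. \<sigma> g m0 = \<sigma> a m0}"
    then have g: "g \<in> carrier G" "\<sigma> g m0 = \<sigma> a m0" by simp_all
    then have "inv a \<otimes> g \<in> stabilizer G \<sigma> m0" using iff[OF g(1)] by simp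
    then show "g \<in> a <# stabilizer G \<sigma> m0"
      by (rule subgroup.lcos_module_rev[OF stab is_group a g(1)])
  next
    fix g assume g: "g \<in> a <# stabilizer G \<sigma> m0"
    have gG: "g \<in> carrier G" by (rule l_coset_carrier[OF g a stab])
    moreover have "inv a \<otimes> g \<in> stabilizer G \<sigma> m0"
      by (rule subgroup.lcos_module_imp[OF stab is_group a g])
    ultimately show "g \<in> {g \<in> carrier G. \<sigma> g m0 = \<sigma> a m0}" using iff[OF gG] by simp
  qed
qed

lemma bij_betw_orbit_left_cosets:
  assumes m0: "m0 \<in> M"
  shows "bij_betw (\<lambda>m. {g \<in> carrier G. \<sigma> g m0 = m})
    (orbit G \<sigma> m0) (left_cosets G (stabilizer G \<sigma> m0))"
proof (rule bij_betw_imageI)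
  show "inj_on (\<lambda>m. {g \<in> carrier G. \<sigma> g m0 = m}) (orbit G \<sigma> m0)"
  proof (rule inj_onI)
    fix m m' assume "m \<in> orbit G \<sigma> m0"
      and "{g \<in> carrier G. \<sigma> g m0 = m} = {g \<in> carrier G. \<sigma> g m0 = m'}"
    then obtain a where "a \<in> carrier G" "\<sigma> a m0 = m" "\<sigma> a m0 = m'"
      unfolding orbit_eq_image by blast
    then show "m = m'" by simp
  qed
  show "(\<lambda>m. {g \<in> carrier G. \<sigma> g m0 = m}) ` orbit G \<sigma> m0
    = left_cosets G (stabilizer G \<sigma> m0)"
    unfolding orbit_eq_image left_cosets_def image_image
    using transporter_eq_l_coset[OF m0] by (intro image_cong) simp_all
qed

lemma transporter_act:
  assumes m0: "m0 \<in> M" and m: "m \<in> orbit G \<sigma> m0" and g: "g \<in> carrier G"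
  shows "{k \<in> carrier G. \<sigma> k m0 = \<sigma> g m} = g <# {k \<in> carrier G. \<sigma> k m0 = m}"
proof -
  obtain a where a: "a \<in> carrier G" "m = \<sigma> a m0"
    using m unfolding orbit_eq_image by blast
  have "stabilizer G \<sigma> m0 \<subseteq> carrier G"
    using subgroup.subset[OF subgroup_stabilizer[OF m0]] .
  then show ?thesis
    using a g m0 by (simp add: act_mult[symmetric] transporter_eq_l_coset lcos_m_assoc)
qed

end

lemma near_group_equation_iff:
  fixes \<alpha> c n h :: nat
  assumes "0 < c"
  shows "real \<alpha> = real c * real n - real h / real c \<longleftrightarrow> n * c * c = h + \<alpha> * c"
proof -
  have "real \<alpha> = real c * real n - real h / real c
      \<longleftrightarrow> real \<alpha> * real c = real c * real n * real c - real h"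
    using assms by (simp add: field_simps)
  also have "\<dots> \<longleftrightarrow> real (n * c * c) = real (h + \<alpha> * c)"
    by (simp add: algebra_simps) linarith
  finally show ?thesis by (simp only: of_nat_eq_iff)
qed

lemma near_group_equation_consequences:
  fixes \<alpha> c n h :: nat
  assumes "0 < h" and eq: "n * c * c = h + \<alpha> * c"
  shows "0 < c" "c dvd h" "h \<le> c ^ 2 * n"
proof -
  show "0 < c" using assms by (rule_tac ccontr) simp
  have "c dvd h + \<alpha> * c" by (simp flip: eq)
  then show "c dvd h" by (simp add: dvd_add_left_iff)
  show "h \<le> c ^ 2 * n" using eq by (simp add: power2_eq_square algebra_simps)
qed

(* The permutation by which g acts on the basis of a NIM-rep (see ex_ng_gmaps); outside
   g in carrier G and m in M it is an arbitrary value chosen by THE. *)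
definition ng_gact :: "('g ng_basis \<Rightarrow> 'm \<Rightarrow> 'm \<Rightarrow> nat) \<Rightarrow> 'g \<Rightarrow> 'm \<Rightarrow> 'm" where
  "ng_gact act g m = (THE m'. ng_gmaps act g m m')"

lemma ng_gmaps_unique:
  assumes "ng_gmaps act g m m1" "ng_gmaps act g m m2"
  shows "m1 = m2"
  using assms unfolding ng_gmaps_def by (metis one_neq_zero)

lemma ng_gact_eqI:
  assumes "ng_gmaps act g m m'"
  shows "ng_gact act g m = m'"
  unfolding ng_gact_def
  by (rule the_equality[of "ng_gmaps act g m", OF assms]) (rule ng_gmaps_unique[OF _ assms])

locale near_group_nimrep = group G for G :: "('g, 'b) monoid_scheme" (structure) +
  fixes \<alpha> :: nat and M :: "'m set" and act :: "'g ng_basis \<Rightarrow> 'm \<Rightarrow> 'm \<Rightarrow> nat"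
  assumes finite_carrier: "finite (carrier G)" and nimrep: "ng_nimrep G \<alpha> M act"
begin

lemma act_outside: "\<lbrakk>b \<in> ng_basis_set G; m \<in> M; m' \<notin> M\<rbrakk> \<Longrightarrow> act b m m' = 0"
  and finite_support: "\<lbrakk>b \<in> ng_basis_set G; m \<in> M\<rbrakk> \<Longrightarrow> finite {m' \<in> M. act b m m' \<noteq> 0}"
  and act_Grp_one: "\<lbrakk>m \<in> M; m' \<in> M\<rbrakk> \<Longrightarrow> act (Grp \<one>) m m' = (if m' = m then 1 else 0)"
  and act_assoc: "\<lbrakk>b \<in> ng_basis_set G; b' \<in> ng_basis_set G; m \<in> M; m'' \<in> M\<rbrakk> \<Longrightarrow>
      (\<Sum>m' \<in> {m' \<in> M. act b' m m' \<noteq> 0}. act b' m m' * act b m' m'')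
      = (\<Sum>c \<in> ng_basis_set G. ng_coeff G \<alpha> b b' c * act c m m'')"
  and act_dual: "\<lbrakk>b \<in> ng_basis_set G; m \<in> M; m' \<in> M\<rbrakk> \<Longrightarrow> act b m m' = act (ng_dual G b) m' m"
  using nimrep unfolding ng_nimrep_def by blast+

lemma act_assoc_Grp_Grp:
  assumes "g \<in> carrier G" "h \<in> carrier G" "m \<in> M" "m'' \<in> M"
  shows "(\<Sum>m' \<in> {m' \<in> M. act (Grp h) m m' \<noteq> 0}. act (Grp h) m m' * act (Grp g) m' m'')
    = act (Grp (g \<otimes> h)) m m''"
  using act_assoc[OF Grp_in_ng_basis_set Grp_in_ng_basis_set, OF assms]
  unfolding sum_ng_coeff_Grp_Grp[OF finite_carrier assms(1,2)] .

lemma act_assoc_Xel_Grp: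
  assumes "g \<in> carrier G" "m \<in> M" "m'' \<in> M"
  shows "(\<Sum>m' \<in> {m' \<in> M. act (Grp g) m m' \<noteq> 0}. act (Grp g) m m' * act Xel m' m'')
    = act Xel m m''"
  using act_assoc[OF Xel_in_ng_basis_set Grp_in_ng_basis_set, OF assms]
  unfolding sum_ng_coeff_Xel_Grp[OF finite_carrier] .

lemma act_assoc_Xel_Xel:
  assumes "m \<in> M" "m'' \<in> M"
  shows "(\<Sum>m' \<in> {m' \<in> M. act Xel m m' \<noteq> 0}. act Xel m m' * act Xel m' m'')
    = (\<Sum>k \<in> carrier G. act (Grp k) m m'') + \<alpha> * act Xel m m''"
  using act_assoc[OF Xel_in_ng_basis_set Xel_in_ng_basis_set, OF assms]
  unfolding sum_ng_coeff_Xel_Xel[OF finite_carrier] .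

(* Duality turns the coefficient of m in (g^-1 g) |> m = m into a sum of squares of the
   coefficients of g |> m; a sum of squares of naturals equal to 1 has one nonzero term. *)
lemma ex_ng_gmaps:
  assumes g: "g \<in> carrier G" and m: "m \<in> M"
  obtains m1 where "m1 \<in> M" "ng_gmaps act g m m1"
proof -
  let ?S = "{m' \<in> M. act (Grp g) m m' \<noteq> 0}"
  have "(\<Sum>m' \<in> ?S. act (Grp g) m m' * act (Grp g) m m')
      = (\<Sum>m' \<in> ?S. act (Grp g) m m' * act (Grp (inv g)) m' m)"
    using act_dual[OF Grp_in_ng_basis_set[OF inv_closed[OF g]] _ m] g by (intro sum.cong) simp_all
  also have "\<dots> = act (Grp (inv g \<otimes> g)) m m"
    by (rule act_assoc_Grp_Grp[OF inv_closed[OF g] g m m])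
  also have "\<dots> = 1"
    using g m by (simp add: act_Grp_one)
  finally have "\<exists>m1. ?S = {m1} \<and> act (Grp g) m m1 = 1"
    by (intro nat_sum_squares_eq_1 finite_support[OF Grp_in_ng_basis_set[OF g] m]) simp_all
  then obtain m1 where S: "?S = {m1}" and one: "act (Grp g) m m1 = 1" by blast
  have mem: "m' \<in> M \<and> act (Grp g) m m' \<noteq> 0 \<longleftrightarrow> m' = m1" for m'
    using arg_cong[OF S, of "\<lambda>A. m' \<in> A"] by simp
  have "act (Grp g) m m' = (if m' = m1 then 1 else 0)" for m'
    using mem[of m'] one act_outside[OF Grp_in_ng_basis_set[OF g] m, of m'] by (cases "m' \<in> M") auto
  moreover have "m1 \<in> M" using mem[of m1] by simp
  ultimately show thesis by (intro that[of m1]) (simp_all add: ng_gmaps_def)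
qed

lemma ng_gmaps_ng_gact: "\<lbrakk>g \<in> carrier G; m \<in> M\<rbrakk> \<Longrightarrow> ng_gmaps act g m (ng_gact act g m)"
  and ng_gact_closed: "\<lbrakk>g \<in> carrier G; m \<in> M\<rbrakk> \<Longrightarrow> ng_gact act g m \<in> M"
  by (metis ex_ng_gmaps ng_gact_eqI)+

lemma ng_gmaps_iff: "\<lbrakk>g \<in> carrier G; m \<in> M\<rbrakk> \<Longrightarrow> ng_gmaps act g m m' \<longleftrightarrow> m' = ng_gact act g m"
  using ng_gmaps_ng_gact ng_gact_eqI by metis

lemma act_Grp: "\<lbrakk>g \<in> carrier G; m \<in> M\<rbrakk> \<Longrightarrow> act (Grp g) m m' = (if m' = ng_gact act g m then 1 else 0)"
  using ng_gmaps_ng_gact unfolding ng_gmaps_def by blast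

lemma support_act_Grp:
  "\<lbrakk>g \<in> carrier G; m \<in> M\<rbrakk> \<Longrightarrow> {m' \<in> M. act (Grp g) m m' \<noteq> 0} = {ng_gact act g m}"
  using ng_gact_closed by (auto simp: act_Grp)

lemma ng_gact_one:
  assumes m: "m \<in> M"
  shows "ng_gact act \<one> m = m"
proof (rule ng_gact_eqI)
  have "act (Grp \<one>) m m'' = (if m'' = m then 1 else 0)" for m''
    using m act_Grp_one[OF m, of m''] act_outside[OF Grp_in_ng_basis_set[OF one_closed] m, of m'']
    by (cases "m'' \<in> M") auto
  then show "ng_gmaps act \<one> m m" unfolding ng_gmaps_def ..
qed

lemma ng_gact_mult:
  assumes g: "g \<in> carrier G" and h: "h \<in> carrier G" and m: "m \<in> M"
  shows "ng_gact act (g \<otimes> h) m = ng_gact act g (ng_gact act h m)"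
proof -
  have "act (Grp g) (ng_gact act h m) m'' = act (Grp (g \<otimes> h)) m m''" if "m'' \<in> M" for m''
    using act_assoc_Grp_Grp[OF g h m that] unfolding support_act_Grp[OF h m]
    by (simp add: act_Grp[OF h m])
  then have "ng_gmaps act g (ng_gact act h m) (ng_gact act (g \<otimes> h) m)"
    using g h m ng_gact_closed act_outside[OF Grp_in_ng_basis_set[OF g] ng_gact_closed[OF h m]]
    unfolding ng_gmaps_def by (metis act_Grp m_closed)
  then show ?thesis by (rule ng_gact_eqI[symmetric])
qed

sublocale set_action G M "ng_gact act"
  by unfold_locales (simp_all add: ng_gact_closed ng_gact_one ng_gact_mult)

lemma act_Xel_sym: "\<lbrakk>m \<in> M; m' \<in> M\<rbrakk> \<Longrightarrow> act Xel m m' = act Xel m' m"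
  using act_dual[OF Xel_in_ng_basis_set] by simp

lemma act_Xel_ng_gact_left:
  assumes g: "g \<in> carrier G" and m: "m \<in> M" and m'': "m'' \<in> M"
  shows "act Xel (ng_gact act g m) m'' = act Xel m m''"
  using act_assoc_Xel_Grp[OF g m m''] unfolding support_act_Grp[OF g m]
  by (simp add: act_Grp[OF g m])

lemma act_Xel_ng_gact_right:
  assumes g: "g \<in> carrier G" and m: "m \<in> M" and m': "m' \<in> M"
  shows "act Xel m (ng_gact act g m') = act Xel m m'"
proof -
  have "act Xel m (ng_gact act g m') = act Xel (ng_gact act g m') m"
    by (rule act_Xel_sym[OF m ng_gact_closed[OF g m']])
  also have "\<dots> = act Xel m' m" by (rule act_Xel_ng_gact_left[OF g m' m])
  also have "\<dots> = act Xel m m'" by (rule act_Xel_sym[OF m' m])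
  finally show ?thesis .
qed

lemma act_Xel_orbit_const:
  assumes m0: "m0 \<in> M" and "m \<in> orbit G (ng_gact act) m0" "m' \<in> orbit G (ng_gact act) m0"
  shows "act Xel m m' = act Xel m0 m0"
proof -
  obtain a b where a: "a \<in> carrier G" "m = ng_gact act a m0"
    and b: "b \<in> carrier G" "m' = ng_gact act b m0"
    using assms(2,3) unfolding orbit_eq_image by blast
  show ?thesis
    using a b m0 by (simp add: act_Xel_ng_gact_left act_Xel_ng_gact_right ng_gact_closed)
qed

lemma sum_act_Grp_eq_card_stabilizer:
  assumes m: "m \<in> M"
  shows "(\<Sum>k \<in> carrier G. act (Grp k) m m) = card (stabilizer G (ng_gact act) m)"
proof -
  have "(\<Sum>k \<in> carrier G. act (Grp k) m m) = (\<Sum>k \<in> carrier G. if ng_gact act k m = m then 1 else 0)"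
    using m by (intro sum.cong) (auto simp: act_Grp)
  also have "\<dots> = card (stabilizer G (ng_gact act) m)"
    using finite_carrier by (simp add: sum.If_cases Int_def stabilizer_def)
  finally show ?thesis .
qed

lemma card_orbit_equation:
  assumes m0: "m0 \<in> M" and orbit: "orbit G (ng_gact act) m0 = M"
  shows "card M * act Xel m0 m0 * act Xel m0 m0
    = card (stabilizer G (ng_gact act) m0) + \<alpha> * act Xel m0 m0"
proof -
  have finM: "finite M"
    using finite_carrier orbit unfolding orbit_eq_image by (metis finite_imageI)
  have "(\<Sum>m' \<in> {m' \<in> M. act Xel m0 m' \<noteq> 0}. act Xel m0 m' * act Xel m' m0)
      = (\<Sum>m' \<in> M. act Xel m0 m' * act Xel m' m0)"
    by (rule sum.mono_neutral_left[OF finM]) auto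
  also have "\<dots> = (\<Sum>m' \<in> M. act Xel m0 m0 * act Xel m0 m0)"
  proof (rule sum.cong[OF refl])
    fix m' assume "m' \<in> M"
    then show "act Xel m0 m' * act Xel m' m0 = act Xel m0 m0 * act Xel m0 m0"
      using act_Xel_orbit_const[OF m0, of m0 m'] act_Xel_orbit_const[OF m0, of m' m0] m0
      unfolding orbit by simp
  qed
  also have "\<dots> = card M * act Xel m0 m0 * act Xel m0 m0" by simp
  finally show ?thesis
    using act_assoc_Xel_Xel[OF m0 m0] sum_act_Grp_eq_card_stabilizer[OF m0] by simp
qed

lemma ng_one_orbit_obtain_orbit:
  assumes "ng_one_orbit G M act"
  obtains m0 where "m0 \<in> M" "orbit G (ng_gact act) m0 = M"
proof -
  obtain m0 where m0: "m0 \<in> M" and reach: "\<forall>m\<in>M. \<exists>g\<in>carrier G. ng_gmaps act g m0 m"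
    using assms unfolding ng_one_orbit_def by blast
  have "M \<subseteq> orbit G (ng_gact act) m0"
    using reach ng_gmaps_iff[OF _ m0] unfolding orbit_eq_image by blast
  with orbit_subset[OF m0] show thesis by (intro that[OF m0]) blast
qed

lemma ng_gmaps_iff_left_cosets:
  assumes m0: "m0 \<in> M" and orbit: "orbit G (ng_gact act) m0 = M"
  defines "\<phi> \<equiv> \<lambda>m. {g \<in> carrier G. ng_gact act g m0 = m}"
  shows "bij_betw \<phi> M (left_cosets G (stabilizer G (ng_gact act) m0))"
    and "\<lbrakk>g \<in> carrier G; m \<in> M; m' \<in> M\<rbrakk> \<Longrightarrow> ng_gmaps act g m m' \<longleftrightarrow> \<phi> m' = g <# \<phi> m"
proof -
  show bij: "bij_betw \<phi> M (left_cosets G (stabilizer G (ng_gact act) m0))"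
    using bij_betw_orbit_left_cosets[OF m0] unfolding orbit \<phi>_def .
  assume g: "g \<in> carrier G" and m: "m \<in> M" and m': "m' \<in> M"
  have "ng_gmaps act g m m' \<longleftrightarrow> \<phi> m' = \<phi> (ng_gact act g m)"
    using ng_gmaps_iff[OF g m] bij_betw_imp_inj_on[OF bij] m' ng_gact_closed[OF g m]
    by (auto dest: inj_onD)
  also have "\<phi> (ng_gact act g m) = g <# \<phi> m"
    using transporter_act[OF m0 _ g, of m] m orbit unfolding \<phi>_def by simp
  finally show "ng_gmaps act g m m' \<longleftrightarrow> \<phi> m' = g <# \<phi> m" .
qed

lemma one_orbit_classification:
  assumes "ng_one_orbit G M act"
  shows "\<exists>H (c::nat). subgroup H G \<and> c > 0 \<and>
          (\<exists>\<phi>. bij_betw \<phi> M (left_cosets G H) \<and>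
               (\<forall>g\<in>carrier G. \<forall>m\<in>M. \<forall>m'\<in>M. ng_gmaps act g m m' \<longleftrightarrow> \<phi> m' = g <# \<phi> m)) \<and>
          (\<forall>m\<in>M. \<forall>m'\<in>M. act Xel m m' = c) \<and>
          real \<alpha> = real c * real (card (left_cosets G H)) - real (card H) / real c \<and>
          c dvd card H \<and> c ^ 2 * card (left_cosets G H) \<ge> card H"
proof -
  obtain m0 where m0: "m0 \<in> M" and orbit: "orbit G (ng_gact act) m0 = M"
    using ng_one_orbit_obtain_orbit[OF assms] .
  define H where "H = stabilizer G (ng_gact act) m0"
  define c where "c = act Xel m0 m0"
  note bij = ng_gmaps_iff_left_cosets(1)[OF m0 orbit, folded H_def]
  have H: "subgroup H G" unfolding H_def by (rule subgroup_stabilizer[OF m0])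
  have count: "card (left_cosets G H) * c * c = card H + \<alpha> * c"
    using card_orbit_equation[OF m0 orbit] bij_betw_same_card[OF bij] unfolding H_def c_def by simp
  have "0 < card H"
    using H finite_subset[OF subgroup.subset[OF H] finite_carrier] subgroup.one_closed[OF H]
    by (auto simp: card_gt_0_iff)
  note consequences = near_group_equation_consequences[OF this count]
  show ?thesis
  proof (intro exI conjI)
    show "subgroup H G" "0 < c" "c dvd card H" "card H \<le> c ^ 2 * card (left_cosets G H)"
      by (fact H consequences)+
    show "real \<alpha> = real c * real (card (left_cosets G H)) - real (card H) / real c"
      using near_group_equation_iff[OF consequences(1)] count by blast
    show "\<forall>m\<in>M. \<forall>m'\<in>M. act Xel m m' = c"
      using act_Xel_orbit_const[OF m0] unfolding orbit c_def by blast
  qed (use bij ng_gmaps_iff_left_cosets(2)[OF m0 orbit] in blast)+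
qed

end

context group
begin

lemma set_action_l_coset:
  assumes H: "subgroup H G"
  shows "set_action G (left_cosets G H) (l_coset G)"
proof (intro set_action.intro set_action_axioms.intro is_group)
  have sub: "m \<subseteq> carrier G" if "m \<in> left_cosets G H" for m
    using that l_coset_subset_G[OF subgroup.subset[OF H]] unfolding left_cosets_def by blast
  show "g <# m \<in> left_cosets G H" if g: "g \<in> carrier G" and m: "m \<in> left_cosets G H" for g m
  proof -
    obtain x where "x \<in> carrier G" "m = x <# H" using m unfolding left_cosets_def by blast
    then show ?thesis
      using g subgroup.subset[OF H] unfolding left_cosets_def by (simp add: lcos_m_assoc)
  qed
  show "\<one> <# m = m" if "m \<in> left_cosets G H" for m
    by (rule lcos_mult_one[OF sub[OF that]])
  show "(g \<otimes> h) <# m = g <# (h <# m)"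
    if "g \<in> carrier G" "h \<in> carrier G" "m \<in> left_cosets G H" for g h m
    using that by (simp add: lcos_m_assoc[OF sub[OF that(3)]])
qed

lemma subgroup_in_left_cosets: "subgroup H G \<Longrightarrow> H \<in> left_cosets G H"
  using lcos_mult_one[OF subgroup.subset] unfolding left_cosets_def by force

lemma orbit_l_coset: "orbit G (l_coset G) H = left_cosets G H"
  unfolding orbit_def left_cosets_def by auto

lemma stabilizer_l_coset:
  assumes H: "subgroup H G"
  shows "stabilizer G (l_coset G) H = H"
proof
  show "stabilizer G (l_coset G) H \<subseteq> H"
    using lcos_self[OF _ H] unfolding stabilizer_def by auto
  show "H \<subseteq> stabilizer G (l_coset G) H"
    using coset_join3[OF _ H] subgroup.mem_carrier[OF H] unfolding stabilizer_def by auto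
qed

lemma ng_one_orbit_coset_act:
  assumes H: "subgroup H G"
  shows "ng_one_orbit G (left_cosets G H) (ng_coset_act G H c)"
  unfolding ng_one_orbit_def
proof (intro bexI[OF _ subgroup_in_left_cosets[OF H]] ballI)
  fix m assume "m \<in> left_cosets G H"
  then obtain x where "x \<in> carrier G" "m = x <# H" unfolding left_cosets_def by blast
  then show "\<exists>g\<in>carrier G. ng_gmaps (ng_coset_act G H c) g H m"
    by (auto simp: ng_gmaps_def ng_coset_act_def)
qed

end

lemma ng_coset_act_Grp: "ng_coset_act G H c (Grp g) m m' = (if m' = g <#\<^bsub>G\<^esub> m then 1 else 0)"
  and ng_coset_act_Xel: "ng_coset_act G H c Xel m m' = (if m' \<in> left_cosets G H then c else 0)"
  by (simp_all add: ng_coset_act_def)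

(* card_equation is the formula for alpha with the denominator cleared
   (near_group_equation_iff). *)
locale coset_nimrep = group G for G :: "('g, 'b) monoid_scheme" (structure) +
  fixes H :: "'g set" and c \<alpha> :: nat
  assumes finite_carrier: "finite (carrier G)" and subgroup_H: "subgroup H G" and c_pos: "0 < c"
    and card_equation: "card (left_cosets G H) * c * c = card H + \<alpha> * c"
begin

sublocale coset: set_action G "left_cosets G H" "l_coset G"
  by (rule set_action_l_coset[OF subgroup_H])

lemma finite_left_cosets: "finite (left_cosets G H)"
  using finite_carrier unfolding left_cosets_def by simp

lemma support_coset_act_Grp:
  "\<lbrakk>g \<in> carrier G; m \<in> left_cosets G H\<rbrakk>
    \<Longrightarrow> {m' \<in> left_cosets G H. ng_coset_act G H c (Grp g) m m' \<noteq> 0} = {g <# m}"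
  using coset.act_closed by (auto simp: ng_coset_act_Grp)

lemma support_coset_act_Xel:
  "{m' \<in> left_cosets G H. ng_coset_act G H c Xel m m' \<noteq> 0} = left_cosets G H"
  using c_pos by (auto simp: ng_coset_act_Xel)

lemma sum_coset_act_Xel_Grp:
  assumes g: "g \<in> carrier G" and m'': "m'' \<in> left_cosets G H"
  shows "(\<Sum>m' \<in> left_cosets G H. ng_coset_act G H c Xel m m' * ng_coset_act G H c (Grp g) m' m'') = c"
proof -
  have "(\<Sum>m' \<in> left_cosets G H. ng_coset_act G H c Xel m m' * ng_coset_act G H c (Grp g) m' m'')
      = (\<Sum>m' \<in> left_cosets G H. if m' = inv g <# m'' then c else 0)"
  proof (rule sum.cong[OF refl])
    fix m' assume m': "m' \<in> left_cosets G H"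
    have "m'' = g <# m' \<longleftrightarrow> m' = inv g <# m''"
      using coset.act_eq_iff[OF g m' m''] by auto
    then show "ng_coset_act G H c Xel m m' * ng_coset_act G H c (Grp g) m' m''
        = (if m' = inv g <# m'' then c else 0)"
      using m' by (simp add: ng_coset_act_Grp ng_coset_act_Xel)
  qed
  also have "\<dots> = c"
    using finite_left_cosets coset.act_closed[OF inv_closed[OF g] m''] by (simp add: sum.delta')
  finally show ?thesis .
qed

lemma sum_coset_act_Grp:
  assumes m: "m \<in> left_cosets G H" and m'': "m'' \<in> left_cosets G H"
  shows "(\<Sum>k \<in> carrier G. ng_coset_act G H c (Grp k) m m'') = card H"
proof -
  have "(\<Sum>k \<in> carrier G. ng_coset_act G H c (Grp k) m m'') = card {k \<in> carrier G. k <# m = m''}"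
    using finite_carrier by (simp add: ng_coset_act_Grp sum.If_cases Int_def eq_commute)
  also have "\<dots> = card (stabilizer G (l_coset G) H)"
    by (rule coset.card_transporter)
      (simp_all add: orbit_l_coset subgroup_in_left_cosets[OF subgroup_H] m m'')
  also have "\<dots> = card H" by (simp add: stabilizer_l_coset[OF subgroup_H])
  finally show ?thesis .
qed

lemma coset_act_assoc:
  assumes b: "b \<in> ng_basis_set G" and b': "b' \<in> ng_basis_set G"
    and m: "m \<in> left_cosets G H" and m'': "m'' \<in> left_cosets G H"
  shows "(\<Sum>m' \<in> {m' \<in> left_cosets G H. ng_coset_act G H c b' m m' \<noteq> 0}.
            ng_coset_act G H c b' m m' * ng_coset_act G H c b m' m'')
       = (\<Sum>x \<in> ng_basis_set G. ng_coeff G \<alpha> b b' x * ng_coset_act G H c x m m'')"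
proof -
  from b' b show ?thesis
  proof (cases rule: ng_basis_set_cases[case_product ng_basis_set_cases])
    case (Grp_Grp h g)
    show ?thesis
      unfolding Grp_Grp(2,4) support_coset_act_Grp[OF Grp_Grp(1) m]
        sum_ng_coeff_Grp_Grp[OF finite_carrier Grp_Grp(3,1)]
      using m Grp_Grp(1,3) by (simp add: ng_coset_act_Grp coset.act_mult)
  next
    case (Grp_Xel h)
    show ?thesis
      unfolding Grp_Xel(2,3) support_coset_act_Grp[OF Grp_Xel(1) m] sum_ng_coeff_Xel_Grp[OF finite_carrier]
      using coset.act_closed[OF Grp_Xel(1) m] m'' by (simp add: ng_coset_act_Grp ng_coset_act_Xel)
  next
    case (Xel_Grp g)
    show ?thesis
      unfolding Xel_Grp(1,3) support_coset_act_Xel sum_ng_coeff_Grp_Xel[OF finite_carrier]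
        sum_coset_act_Xel_Grp[OF Xel_Grp(2) m'']
      using m'' by (simp add: ng_coset_act_Xel)
  next
    case Xel_Xel
    show ?thesis
      unfolding Xel_Xel support_coset_act_Xel sum_ng_coeff_Xel_Xel[OF finite_carrier]
        sum_coset_act_Grp[OF m m'']
      using m'' card_equation by (simp add: ng_coset_act_Xel)
  qed
qed

lemma ng_nimrep_coset_act: "ng_nimrep G \<alpha> (left_cosets G H) (ng_coset_act G H c)"
  unfolding ng_nimrep_def
proof (intro conjI ballI allI impI)
  show "left_cosets G H \<noteq> {}" using subgroup_in_left_cosets[OF subgroup_H] by blast
next
  fix b m m' assume "b \<in> ng_basis_set G" "m \<in> left_cosets G H" "m' \<notin> left_cosets G H"
  then show "ng_coset_act G H c b m m' = 0"
    by (cases rule: ng_basis_set_cases) (auto simp: ng_coset_act_Grp ng_coset_act_Xel coset.act_closed)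
next
  fix b m show "finite {m' \<in> left_cosets G H. ng_coset_act G H c b m m' \<noteq> 0}"
    using finite_left_cosets by simp
next
  fix m m' assume "m \<in> left_cosets G H"
  then show "ng_coset_act G H c (Grp \<one>) m m' = (if m' = m then 1 else 0)"
    by (simp add: ng_coset_act_Grp coset.act_one)
next
  fix b b' m m'' assume "b \<in> ng_basis_set G" "b' \<in> ng_basis_set G"
    "m \<in> left_cosets G H" "m'' \<in> left_cosets G H"
  then show "(\<Sum>m' \<in> {m' \<in> left_cosets G H. ng_coset_act G H c b' m m' \<noteq> 0}.
          ng_coset_act G H c b' m m' * ng_coset_act G H c b m' m'')
      = (\<Sum>x \<in> ng_basis_set G. ng_coeff G \<alpha> b b' x * ng_coset_act G H c x m m'')"
    by (rule coset_act_assoc)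
next
  fix b m m' assume b: "b \<in> ng_basis_set G" and m: "m \<in> left_cosets G H" and m': "m' \<in> left_cosets G H"
  from b show "ng_coset_act G H c b m m' = ng_coset_act G H c (ng_dual G b) m' m"
  proof (cases rule: ng_basis_set_cases)
    case (Grp g)
    have "m' = g <# m \<longleftrightarrow> m = inv g <# m'"
      using coset.act_eq_iff[OF Grp(1) m m'] by auto
    then show ?thesis using Grp by (simp add: ng_coset_act_Grp)
  qed (simp add: ng_coset_act_Xel m m')
qed

end

theorem proposition3p14:
  fixes G :: "'g monoid" and \<alpha> :: nat
  assumes "group G" and "finite (carrier G)"
  shows
   "(\<forall>(M :: 'm set) act. ng_nimrep G \<alpha> M act \<and> ng_one_orbit G M act \<longrightarrow>
       (\<exists>H (c::nat). subgroup H G \<and> c > 0 \<and>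
          (\<exists>\<phi>. bij_betw \<phi> M (left_cosets G H) \<and>
               (\<forall>g\<in>carrier G. \<forall>m\<in>M. \<forall>m'\<in>M.
                   ng_gmaps act g m m' \<longleftrightarrow> \<phi> m' = g <#\<^bsub>G\<^esub> \<phi> m)) \<and>
          (\<forall>m\<in>M. \<forall>m'\<in>M. act Xel m m' = c) \<and>
          real \<alpha> = real c * real (card (left_cosets G H)) - real (card H) / real c \<and>
          c dvd card H \<and>
          c ^ 2 * card (left_cosets G H) \<ge> card H))
    \<and>
    (\<forall>H (c::nat). subgroup H G \<and> c > 0 \<and>
          real \<alpha> = real c * real (card (left_cosets G H)) - real (card H) / real c \<and>
          c dvd card H \<and>
          c ^ 2 * card (left_cosets G H) \<ge> card H \<longrightarrow>
        ng_nimrep G \<alpha> (left_cosets G H) (ng_coset_act G H c) \<and>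
        ng_one_orbit G (left_cosets G H) (ng_coset_act G H c))"
  apply (rule conjI; intro allI impI)
  subgoal for M act
    using assms by (intro near_group_nimrep.one_orbit_classification)
      (simp_all add: near_group_nimrep_def near_group_nimrep_axioms_def)
  subgoal premises prems for H c
  proof -
    have "coset_nimrep G H c \<alpha>"
      using assms prems near_group_equation_iff[of c \<alpha> "card (left_cosets G H)" "card H"]
      by (simp add: coset_nimrep_def coset_nimrep_axioms_def)
    then show ?thesis
      using group.ng_one_orbit_coset_act[OF assms(1)] prems
      by (simp add: coset_nimrep.ng_nimrep_coset_act)
  qed
  done

end
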